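(* If $G$ is a finitely generated nilpotent group, then there is a polynomial $p$ such that for every $n\in\mathbb{N}$, every element of $G^{\omega,n}$ satisfies a recurrence of order $p(n)$.
   Context: $G^\omega$ is the group of all functions $f\colon\mathbb{N}\to G$ under pointwise multiplication. $f$ has period at most $n$ if there is $1\le q\le n$ with $f(t)=f(t+q)$ for all $t\ge0$. $G^{\omega,n}$ is the subgroup of $G^\omega$ generated by all elements of period at most $n$. The shift $\rho\colon G^\omega\to G^\omega$ is $(\rho(f))(t)=f(t+1)$. For a subgroup $K\le G^\omega$, $K^{(n)}$ is the smallest subgroup of $G^\omega$ containing $\rho^0(K),\rho^1(K),\ldots,\rho^n(K)$. A function $f\in G^\omega$ satisfies a recurrence of order $d\ge1$ if $\rho^d(f)\in\langle f\rangle^{(d-1)}$. *)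

theory Defs
  imports "HOL-Algebra.Algebra" "HOL-Computational_Algebra.Polynomial"
begin

definition comm_subgroup :: "('a, 'b) monoid_scheme \<Rightarrow> 'a set \<Rightarrow> 'a set \<Rightarrow> 'a set" where
  "comm_subgroup G H K = generate G
     {h \<otimes>\<^bsub>G\<^esub> k \<otimes>\<^bsub>G\<^esub> inv\<^bsub>G\<^esub> h \<otimes>\<^bsub>G\<^esub> inv\<^bsub>G\<^esub> k | h k. h \<in> H \<and> k \<in> K}"

fun lcs :: "('a, 'b) monoid_scheme \<Rightarrow> nat \<Rightarrow> 'a set" where
  "lcs G 0 = carrier G"
| "lcs G (Suc i) = comm_subgroup G (lcs G i) (carrier G)"

definition nilpotent_group :: "('a, 'b) monoid_scheme \<Rightarrow> bool" where
  "nilpotent_group G \<longleftrightarrow> group G \<and> (\<exists>c. lcs G c = {\<one>\<^bsub>G\<^esub>})"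

definition finitely_generated_group :: "('a, 'b) monoid_scheme \<Rightarrow> bool" where
  "finitely_generated_group G \<longleftrightarrow>
     (\<exists>S. finite S \<and> S \<subseteq> carrier G \<and> generate G S = carrier G)"

definition seq_group :: "('a, 'b) monoid_scheme \<Rightarrow> (nat \<Rightarrow> 'a) monoid" where
  "seq_group G = \<lparr> partial_object.carrier = {f. \<forall>t. f t \<in> carrier G},
                   monoid.mult = (\<lambda>f g t. f t \<otimes>\<^bsub>G\<^esub> g t),
                   monoid.one = (\<lambda>t. \<one>\<^bsub>G\<^esub>) \<rparr>"

definition has_period_at_most :: "nat \<Rightarrow> (nat \<Rightarrow> 'a) \<Rightarrow> bool" where
  "has_period_at_most n f \<longleftrightarrow> (\<exists>q. 1 \<le> q \<and> q \<le> n \<and> (\<forall>t. f t = f (t + q)))"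

definition periodic_subgroup :: "('a, 'b) monoid_scheme \<Rightarrow> nat \<Rightarrow> (nat \<Rightarrow> 'a) set" where
  "periodic_subgroup G n = generate (seq_group G)
      {f \<in> carrier (seq_group G). has_period_at_most n f}"

definition shift :: "(nat \<Rightarrow> 'a) \<Rightarrow> nat \<Rightarrow> 'a" where
  "shift f = (\<lambda>t. f (t + 1))"

definition shift_closure :: "('a, 'b) monoid_scheme \<Rightarrow> (nat \<Rightarrow> 'a) set \<Rightarrow> nat \<Rightarrow> (nat \<Rightarrow> 'a) set" where
  "shift_closure G K n = generate (seq_group G) (\<Union>i\<in>{0..n}. (shift ^^ i) ` K)"

definition satisfies_recurrence :: "('a, 'b) monoid_scheme \<Rightarrow> nat \<Rightarrow> (nat \<Rightarrow> 'a) \<Rightarrow> bool" where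
  "satisfies_recurrence G d f \<longleftrightarrow> 1 \<le> d \<and>
     (shift ^^ d) f \<in> shift_closure G (generate (seq_group G) {f}) (d - 1)"

end

theory Submission
  imports Defs
begin

(* Write \<gamma>_j for the lower central series of G, N_j = n^(2^j), and \<Psi>_k for the subgroup of
   G^\<omega> generated by the sequences that take values in some \<gamma>_j with j \<ge> k and have a period
   at most N_j. Then G^{\<omega>,n} lies in \<Psi>_0, and \<Psi>_c is trivial if \<gamma>_c is. The commutator of a
   p-periodic sequence in \<gamma>_i and an r-periodic one in \<gamma>_j is pr-periodic with values in
   \<gamma>_(max i j + 1), and pr \<le> N_(max i j + 1); hence \<Psi>_0 normalises every \<Psi>_k.
   The difference operator \<Delta>_q x = \<rho>^q(x) x^-1 kills q-periodic sequences and satisfies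
   \<Delta>_q(xy) = \<Delta>_q(x) x \<Delta>_q(y) x^-1, so applying \<Delta>_1, ..., \<Delta>_(N_k) maps \<Psi>_k into \<Psi>_(k+1).
   Finally, whenever \<Delta>_(q_m) ... \<Delta>_(q_1) f = 1, the shift \<rho>^(q_1 + ... + q_m) f lies in the subgroup
   generated by the earlier shifts of f. Running through all layers gives a recurrence of order
   \<Sum>_(k<c) \<Sum>_(q \<le> N_k) q \<le> c n^(2^c). *)

definition has_period :: "nat \<Rightarrow> (nat \<Rightarrow> 'a) \<Rightarrow> bool" where
  "has_period p g \<longleftrightarrow> (\<forall>t. g (t + p) = g t)"

lemma has_period_dvd:
  assumes "has_period p g" and "p dvd q"
  shows "has_period q g"
proof -
  obtain m where q: "q = p * m" using assms(2) by blast
  have "g (t + p * m) = g t" for t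
  proof (induction m)
    case (Suc m)
    have "g (t + p * Suc m) = g (t + p * m + p)" by (simp add: algebra_simps)
    also have "\<dots> = g (t + p * m)" using assms(1) by (simp add: has_period_def)
    finally show ?case using Suc by simp
  qed simp
  then show ?thesis by (simp add: has_period_def q)
qed

lemma funpow_shift: "(shift ^^ q) f = (\<lambda>t. f (t + q))"
  by (induction q arbitrary: f) (auto simp: shift_def ac_simps)

lemma has_period_funpow_shift: "has_period p g \<Longrightarrow> has_period p ((shift ^^ q) g)"
  unfolding has_period_def funpow_shift by (metis add.commute add.left_commute)

lemma seq_group_carrier: "carrier (seq_group G) = {f. \<forall>t. f t \<in> carrier G}"
  and seq_group_mult: "x \<otimes>\<^bsub>seq_group G\<^esub> y = (\<lambda>t. x t \<otimes>\<^bsub>G\<^esub> y t)"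
  and seq_group_one: "\<one>\<^bsub>seq_group G\<^esub> = (\<lambda>t. \<one>\<^bsub>G\<^esub>)"
  by (simp_all add: seq_group_def)

context group
begin

lemma inv_mult_cancel [simp]: "x \<in> carrier G \<Longrightarrow> y \<in> carrier G \<Longrightarrow> inv x \<otimes> (x \<otimes> y) = y"
  and mult_inv_cancel [simp]: "x \<in> carrier G \<Longrightarrow> y \<in> carrier G \<Longrightarrow> x \<otimes> (inv x \<otimes> y) = y"
  by (simp_all add: m_assoc[symmetric])

lemma lcs_subgroup: "subgroup (lcs G j) G"
proof (induction j)
  case (Suc j)
  have "{h \<otimes> k \<otimes> inv h \<otimes> inv k | h k. h \<in> lcs G j \<and> k \<in> carrier G} \<subseteq> carrier G"
    using Suc subgroup.mem_carrier by fastforce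
  then show ?case by (simp add: comm_subgroup_def generate_is_subgroup)
qed (simp add: subgroup_self)

lemma lcs_carrier: "x \<in> lcs G j \<Longrightarrow> x \<in> carrier G"
  by (rule subgroup.mem_carrier[OF lcs_subgroup])

lemma lcs_inv: "x \<in> lcs G j \<Longrightarrow> inv x \<in> lcs G j"
  by (rule subgroup.m_inv_closed[OF lcs_subgroup])

lemma lcs_commutator:
  "h \<in> lcs G j \<Longrightarrow> k \<in> carrier G \<Longrightarrow> h \<otimes> k \<otimes> inv h \<otimes> inv k \<in> lcs G (Suc j)"
  unfolding lcs.simps comm_subgroup_def by (rule generate.incl) blast

lemma commutator_in_lcs_max:
  assumes x: "x \<in> lcs G i" and y: "y \<in> lcs G j"
  shows "inv x \<otimes> y \<otimes> x \<otimes> inv y \<in> lcs G (Suc (max i j))"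
proof -
  have xc: "x \<in> carrier G" and yc: "y \<in> carrier G"
    using x y by (auto intro: lcs_carrier)
  show ?thesis
  proof (cases "i \<le> j")
    case True
    have "y \<otimes> inv x \<otimes> inv y \<otimes> x \<in> lcs G (Suc j)"
      using lcs_commutator[OF y inv_closed[OF xc]] by (simp only: inv_inv[OF xc])
    then have "inv (y \<otimes> inv x \<otimes> inv y \<otimes> x) \<in> lcs G (Suc j)"
      by (rule lcs_inv)
    moreover have "inv (y \<otimes> inv x \<otimes> inv y \<otimes> x) = inv x \<otimes> y \<otimes> x \<otimes> inv y"
      using xc yc by (simp add: inv_mult_group m_assoc)
    ultimately show ?thesis using True by (simp only: max_absorb2)
  next
    case False
    have "inv x \<otimes> y \<otimes> x \<otimes> inv y \<in> lcs G (Suc i)"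
      using lcs_commutator[OF lcs_inv[OF x] yc]
      by (simp only: inv_inv[OF xc])
    then show ?thesis using False by (simp only: max_absorb1 not_le less_imp_le)
  qed
qed

lemma lcs_trivial_from:
  assumes "lcs G c = {\<one>}" and "c \<le> j"
  shows "lcs G j = {\<one>}"
  using assms(2)
proof (induction j rule: dec_induct)
  case (step j)
  have "{h \<otimes> k \<otimes> inv h \<otimes> inv k | h k. h \<in> lcs G j \<and> k \<in> carrier G} = {\<one>}"
    using step.IH by force
  then show ?case by (simp add: comm_subgroup_def generate_one)
qed (use assms(1) in simp)

lemma conj_generate_closed:
  assumes A: "A \<subseteq> carrier G" and b: "b \<in> carrier G"
    and conj: "\<And>a. a \<in> A \<Longrightarrow> b \<otimes> a \<otimes> inv b \<in> generate G A"
    and y: "y \<in> generate G A"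
  shows "b \<otimes> y \<otimes> inv b \<in> generate G A"
  using y
proof (induction y rule: generate.induct)
  case one
  then show ?case using b by (simp add: generate.one)
next
  case (incl a)
  then show ?case by (rule conj)
next
  case (inv a)
  have "a \<in> carrier G" using inv A by blast
  then have "b \<otimes> inv a \<otimes> inv b = inv (b \<otimes> a \<otimes> inv b)"
    using b by (simp add: inv_mult_group m_assoc)
  then show ?case using generate_m_inv_closed[OF A conj[OF inv]] by simp
next
  case (eng y z)
  have "y \<in> carrier G" "z \<in> carrier G"
    using eng.hyps generate_in_carrier[OF A] by blast+
  then have "b \<otimes> (y \<otimes> z) \<otimes> inv b = (b \<otimes> y \<otimes> inv b) \<otimes> (b \<otimes> z \<otimes> inv b)"
    using b by (simp add: m_assoc)
  then show ?case using generate.eng[OF eng.IH] by simp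
qed

lemma generate_conj_closed:
  assumes A: "A \<subseteq> carrier G" and B: "B \<subseteq> carrier G"
    and B_inv: "\<And>b. b \<in> B \<Longrightarrow> inv b \<in> B"
    and commutator: "\<And>a b. a \<in> A \<Longrightarrow> b \<in> B \<Longrightarrow> inv a \<otimes> b \<otimes> a \<otimes> inv b \<in> A"
    and u: "u \<in> generate G B" and x: "x \<in> generate G A"
  shows "u \<otimes> x \<otimes> inv u \<in> generate G A"
proof -
  have conj: "b \<otimes> y \<otimes> inv b \<in> generate G A" if b: "b \<in> B" and y: "y \<in> generate G A" for b y
  proof (rule conj_generate_closed[OF A _ _ y])
    show "b \<in> carrier G" using b B by blast
    fix a assume a: "a \<in> A"
    have "a \<in> carrier G" "b \<in> carrier G" using a b A B by auto
    then have "b \<otimes> a \<otimes> inv b = a \<otimes> (inv a \<otimes> b \<otimes> a \<otimes> inv b)"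
      by (simp add: m_assoc[symmetric])
    then show "b \<otimes> a \<otimes> inv b \<in> generate G A"
      using a b commutator by (simp add: generate.eng generate.incl)
  qed
  show ?thesis
    using u x
  proof (induction u arbitrary: x rule: generate.induct)
    case one
    then show ?case using generate_in_carrier[OF A] by auto
  next
    case (incl b)
    then show ?case by (rule conj)
  next
    case (inv b)
    then show ?case using conj[OF B_inv[OF inv(1)]] B by (auto simp: inv_inv)
  next
    case (eng v w)
    have "v \<in> carrier G" "w \<in> carrier G" "x \<in> carrier G"
      using eng generate_in_carrier A B by blast+
    then have "v \<otimes> w \<otimes> x \<otimes> inv (v \<otimes> w) = v \<otimes> (w \<otimes> x \<otimes> inv w) \<otimes> inv v"
      by (simp add: m_assoc inv_mult_group)
    then show ?case using eng by simp
  qed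
qed

lemma cocycle_image_generate:
  assumes S: "S \<subseteq> carrier G" and R: "subgroup R G"
    and D_carrier: "\<And>x. x \<in> carrier G \<Longrightarrow> D x \<in> carrier G"
    and D_mult: "\<And>x y. x \<in> carrier G \<Longrightarrow> y \<in> carrier G \<Longrightarrow> D (x \<otimes> y) = D x \<otimes> (x \<otimes> D y \<otimes> inv x)"
    and D_gen: "\<And>s. s \<in> S \<Longrightarrow> D s \<in> R"
    and R_conj: "\<And>u r. u \<in> generate G S \<Longrightarrow> r \<in> R \<Longrightarrow> u \<otimes> r \<otimes> inv u \<in> R"
    and x: "x \<in> generate G S"
  shows "D x \<in> R"
proof -
  have D_one: "D \<one> = \<one>"
    using D_mult[of \<one> \<one>] D_carrier[of \<one>] by simp
  show ?thesis
    using x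
  proof (induction rule: generate.induct)
    case one
    then show ?case using D_one subgroup.one_closed[OF R] by simp
  next
    case (incl s)
    then show ?case by (rule D_gen)
  next
    case (inv s)
    have s: "s \<in> carrier G" and Ds: "D s \<in> carrier G" using inv S D_carrier by blast+
    have "D (inv s) \<otimes> (inv s \<otimes> D s \<otimes> s) = D (inv s \<otimes> s)"
      using s D_mult[of "inv s" s] by (simp add: m_assoc)
    also have "\<dots> = \<one>"
      using s D_one by simp
    finally have "D (inv s) = inv (inv s \<otimes> D s \<otimes> s)"
      using s Ds D_carrier[of "inv s"] by (intro inv_equality[symmetric]) auto
    also have "\<dots> = inv s \<otimes> inv (D s) \<otimes> s"
      using s Ds by (simp add: inv_mult_group m_assoc)
    finally show ?case
      using R_conj[OF generate.inv[OF inv] subgroup.m_inv_closed[OF R D_gen[OF inv]]] s by simp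
  next
    case (eng x y)
    have "x \<in> carrier G" "y \<in> carrier G" using eng.hyps generate_in_carrier[OF S] by blast+
    then show ?case
      using D_mult subgroup.m_closed[OF R eng.IH(1) R_conj[OF eng.hyps(1) eng.IH(2)]] by simp
  qed
qed

end

locale sequence_group = group G for G :: "('a, 'b) monoid_scheme" (structure)
begin

abbreviation Seq :: "(nat \<Rightarrow> 'a) monoid" where "Seq \<equiv> seq_group G"

lemma group_seq_group: "group Seq"
proof (rule groupI)
  show "\<exists>y\<in>carrier Seq. y \<otimes>\<^bsub>Seq\<^esub> x = \<one>\<^bsub>Seq\<^esub>" if "x \<in> carrier Seq" for x
    using that by (intro bexI[of _ "\<lambda>t. inv (x t)"]) (auto simp: seq_group_carrier seq_group_mult seq_group_one)
qed (auto simp: seq_group_carrier seq_group_mult seq_group_one m_assoc)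

sublocale Seq: group Seq
  by (rule group_seq_group)

lemma seq_group_inv: "x \<in> carrier Seq \<Longrightarrow> inv\<^bsub>Seq\<^esub> x = (\<lambda>t. inv (x t))"
  by (rule Seq.inv_equality) (auto simp: seq_group_carrier seq_group_mult seq_group_one)

lemma range_lcs_seq_carrier: "range g \<subseteq> lcs G j \<Longrightarrow> g \<in> carrier Seq"
  using lcs_carrier by (auto simp: seq_group_carrier)

lemma group_hom_shift: "group_hom Seq Seq (shift ^^ q)"
proof -
  have "(shift ^^ q) \<in> hom Seq Seq"
    by (rule homI) (simp_all add: funpow_shift seq_group_carrier seq_group_mult)
  then show ?thesis by (simp add: group_hom_def group_hom_axioms_def Seq.is_group)
qed

definition shift_diff :: "nat \<Rightarrow> (nat \<Rightarrow> 'a) \<Rightarrow> nat \<Rightarrow> 'a" where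
  "shift_diff q x = (shift ^^ q) x \<otimes>\<^bsub>Seq\<^esub> inv\<^bsub>Seq\<^esub> x"

lemma shift_diff_apply: "x \<in> carrier Seq \<Longrightarrow> shift_diff q x = (\<lambda>t. x (t + q) \<otimes> inv (x t))"
  by (simp add: shift_diff_def funpow_shift seq_group_mult seq_group_inv)

lemma shift_diff_carrier: "x \<in> carrier Seq \<Longrightarrow> shift_diff q x \<in> carrier Seq"
  by (simp add: shift_diff_def group_hom.hom_closed[OF group_hom_shift])

lemma shift_diff_periodic: "x \<in> carrier Seq \<Longrightarrow> has_period q x \<Longrightarrow> shift_diff q x = \<one>\<^bsub>Seq\<^esub>"
  by (auto simp: shift_diff_apply has_period_def seq_group_one seq_group_carrier)

lemma shift_diff_mult:
  assumes x: "x \<in> carrier Seq" and y: "y \<in> carrier Seq"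
  shows "shift_diff q (x \<otimes>\<^bsub>Seq\<^esub> y)
    = shift_diff q x \<otimes>\<^bsub>Seq\<^esub> (x \<otimes>\<^bsub>Seq\<^esub> shift_diff q y \<otimes>\<^bsub>Seq\<^esub> inv\<^bsub>Seq\<^esub> x)"
proof -
  have xy: "x \<otimes>\<^bsub>Seq\<^esub> y \<in> carrier Seq" using x y by simp
  have "\<And>t. x t \<in> carrier G" "\<And>t. y t \<in> carrier G" using x y by (auto simp: seq_group_carrier)
  then show ?thesis
    unfolding shift_diff_apply[OF x] shift_diff_apply[OF y] shift_diff_apply[OF xy] seq_group_inv[OF x]
    by (simp add: seq_group_mult m_assoc inv_mult_group)
qed

definition shift_span :: "(nat \<Rightarrow> 'a) \<Rightarrow> nat \<Rightarrow> (nat \<Rightarrow> 'a) set" where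
  "shift_span f s = generate Seq ((\<lambda>i. (shift ^^ i) f) ` {..<s})"

lemma shift_span_subgroup: "f \<in> carrier Seq \<Longrightarrow> subgroup (shift_span f s) Seq"
  unfolding shift_span_def
  by (rule Seq.generate_is_subgroup) (auto intro: group_hom.hom_closed[OF group_hom_shift])

lemma shift_span_mono: "s \<le> s' \<Longrightarrow> shift_span f s \<subseteq> shift_span f s'"
  unfolding shift_span_def by (rule Seq.mono_generate) auto

lemma funpow_shift_in_shift_span: "i < s \<Longrightarrow> (shift ^^ i) f \<in> shift_span f s"
  unfolding shift_span_def by (rule generate.incl) simp

lemma funpow_shift_shift_span:
  assumes f: "f \<in> carrier Seq" and x: "x \<in> shift_span f s"
  shows "(shift ^^ q) x \<in> shift_span f (s + q)"
proof -
  have "(\<lambda>i. (shift ^^ i) f) ` {..<s} \<subseteq> carrier Seq"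
    using f group_hom.hom_closed[OF group_hom_shift] by blast
  then have "(shift ^^ q) x \<in> generate Seq ((shift ^^ q) ` (\<lambda>i. (shift ^^ i) f) ` {..<s})"
    using x group_hom.generate_img[OF group_hom_shift] unfolding shift_span_def by blast
  also have "(shift ^^ q) ` (\<lambda>i. (shift ^^ i) f) ` {..<s} = (\<lambda>i. (shift ^^ (i + q)) f) ` {..<s}"
    by (simp add: image_image funpow_shift ac_simps)
  also have "generate Seq \<dots> \<subseteq> shift_span f (s + q)"
    unfolding shift_span_def by (rule Seq.mono_generate) auto
  finally show ?thesis .
qed

lemma shift_diff_mod_shift_span:
  assumes f: "f \<in> carrier Seq" and y: "y \<in> carrier Seq" and q: "1 \<le> q"
    and w: "inv\<^bsub>Seq\<^esub> ((shift ^^ s) f) \<otimes>\<^bsub>Seq\<^esub> y \<in> shift_span f s"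
  shows "inv\<^bsub>Seq\<^esub> ((shift ^^ (s + q)) f) \<otimes>\<^bsub>Seq\<^esub> shift_diff q y \<in> shift_span f (s + q)"
proof -
  interpret span: subgroup "shift_span f (s + q)" Seq
    using f by (rule shift_span_subgroup)
  interpret shift: group_hom Seq Seq "shift ^^ q"
    by (rule group_hom_shift)
  let ?a = "(shift ^^ s) f"
  let ?w = "inv\<^bsub>Seq\<^esub> ?a \<otimes>\<^bsub>Seq\<^esub> y"
  have "?a \<in> carrier Seq" using f group_hom.hom_closed[OF group_hom_shift] by blast
  then have "inv\<^bsub>Seq\<^esub> ((shift ^^ (s + q)) f) \<otimes>\<^bsub>Seq\<^esub> shift_diff q y
      = (shift ^^ q) ?w \<otimes>\<^bsub>Seq\<^esub> (inv\<^bsub>Seq\<^esub> ?w \<otimes>\<^bsub>Seq\<^esub> inv\<^bsub>Seq\<^esub> ?a)"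
    using y by (simp add: shift_diff_def funpow_add add.commute Seq.inv_mult_group Seq.m_assoc
        shift.hom_mult)
  moreover have "(shift ^^ q) ?w \<in> shift_span f (s + q)"
    by (rule funpow_shift_shift_span[OF f w])
  moreover have "?w \<in> shift_span f (s + q)"
    using w shift_span_mono[of s "s + q" f] by auto
  moreover have "?a \<in> shift_span f (s + q)"
    using q by (simp add: funpow_shift_in_shift_span)
  ultimately show ?thesis by simp
qed

lemma fold_shift_diff_carrier: "x \<in> carrier Seq \<Longrightarrow> fold shift_diff qs x \<in> carrier Seq"
  by (induction qs arbitrary: x) (simp_all add: shift_diff_carrier)

lemma fold_shift_diff_mod_shift_span:
  assumes f: "f \<in> carrier Seq" and qs: "\<forall>q\<in>set qs. 1 \<le> q"
  shows "inv\<^bsub>Seq\<^esub> ((shift ^^ sum_list qs) f) \<otimes>\<^bsub>Seq\<^esub> fold shift_diff qs f \<in> shift_span f (sum_list qs)"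
  using qs
proof (induction qs rule: rev_induct)
  case Nil
  then show ?case using f by (simp add: shift_span_def generate.one)
next
  case (snoc q qs)
  then show ?case
    using shift_diff_mod_shift_span[OF f fold_shift_diff_carrier[OF f]] by simp
qed

lemma recurrence_of_fold_shift_diff:
  assumes f: "f \<in> carrier Seq" and qs: "\<forall>q\<in>set qs. 1 \<le> q"
    and one: "fold shift_diff qs f = \<one>\<^bsub>Seq\<^esub>"
  shows "(shift ^^ sum_list qs) f \<in> shift_span f (sum_list qs)"
proof -
  interpret span: subgroup "shift_span f (sum_list qs)" Seq
    using f by (rule shift_span_subgroup)
  have a: "(shift ^^ sum_list qs) f \<in> carrier Seq"
    using f group_hom.hom_closed[OF group_hom_shift] by blast
  have "inv\<^bsub>Seq\<^esub> ((shift ^^ sum_list qs) f) \<in> shift_span f (sum_list qs)"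
    using fold_shift_diff_mod_shift_span[OF f qs] a by (simp add: one)
  then show ?thesis using a span.m_inv_closed by fastforce
qed

lemma shift_span_recurrence_mono:
  assumes f: "f \<in> carrier Seq" and rec: "(shift ^^ s) f \<in> shift_span f s" and "s \<le> d"
  shows "(shift ^^ d) f \<in> shift_span f d"
  using \<open>s \<le> d\<close>
proof (induction d rule: dec_induct)
  case base
  then show ?case by (rule rec)
next
  case (step d)
  then show ?case using funpow_shift_shift_span[OF f, of "(shift ^^ d) f" d 1] by simp
qed

lemma satisfies_recurrenceI:
  assumes "1 \<le> d" and "(shift ^^ d) f \<in> shift_span f d"
  shows "satisfies_recurrence G d f"
proof -
  have "(\<lambda>i. (shift ^^ i) f) ` {..<d} \<subseteq> (\<Union>i\<in>{0..d - 1}. (shift ^^ i) ` generate Seq {f})"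
  proof (rule image_subsetI)
    fix i assume "i \<in> {..<d}"
    then have "i \<in> {0..d - 1}" by auto
    moreover have "(shift ^^ i) f \<in> (shift ^^ i) ` generate Seq {f}"
      by (intro imageI generate.incl) simp
    ultimately show "(shift ^^ i) f \<in> (\<Union>i\<in>{0..d - 1}. (shift ^^ i) ` generate Seq {f})"
      by blast
  qed
  then have "shift_span f d \<subseteq> shift_closure G (generate Seq {f}) (d - 1)"
    unfolding shift_span_def shift_closure_def by (rule Seq.mono_generate)
  then show ?thesis using assms by (auto simp: satisfies_recurrence_def)
qed

end

(* N j bounds the periods allowed at level j of the lower central series; N_mult makes the
   commutator of two such generators a generator again. *)
locale periodic_filtration = sequence_group +
  fixes N :: "nat \<Rightarrow> nat"
  assumes N_mult: "N i * N j \<le> N (Suc (max i j))"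
begin

definition periodic_gens :: "nat \<Rightarrow> (nat \<Rightarrow> 'a) set" where
  "periodic_gens k = {g. \<exists>j\<ge>k. range g \<subseteq> lcs G j \<and> (\<exists>p\<in>{1..N j}. has_period p g)}"

definition periodic_series :: "nat \<Rightarrow> (nat \<Rightarrow> 'a) set" where
  "periodic_series k = generate Seq (periodic_gens k)"

(* Interpolates between \<Psi>_(k+1) (Q = {}) and \<Psi>_k (Q = {1..N k}); each \<Delta>_q removes q from Q. *)
definition layer_gens :: "nat \<Rightarrow> nat set \<Rightarrow> (nat \<Rightarrow> 'a) set" where
  "layer_gens k Q = periodic_gens (Suc k) \<union>
     {g. range g \<subseteq> lcs G k \<and> (\<exists>p\<in>Q \<inter> {1..N k}. has_period p g)}"

definition layer_series :: "nat \<Rightarrow> nat set \<Rightarrow> (nat \<Rightarrow> 'a) set" where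
  "layer_series k Q = generate Seq (layer_gens k Q)"

lemma periodic_gens_carrier: "periodic_gens k \<subseteq> carrier Seq"
  unfolding periodic_gens_def using range_lcs_seq_carrier by blast

lemma periodic_gens_antimono:
  assumes "k \<le> k'" shows "periodic_gens k' \<subseteq> periodic_gens k"
  unfolding periodic_gens_def using le_trans[OF assms] by blast

lemma layer_gens_subset: "layer_gens k Q \<subseteq> periodic_gens k"
proof -
  have "{g. range g \<subseteq> lcs G k \<and> (\<exists>p\<in>Q \<inter> {1..N k}. has_period p g)} \<subseteq> periodic_gens k"
    unfolding periodic_gens_def by blast
  then show ?thesis
    unfolding layer_gens_def using periodic_gens_antimono[of k "Suc k"] by simp
qed

lemma layer_gens_carrier: "layer_gens k Q \<subseteq> carrier Seq"
  using layer_gens_subset periodic_gens_carrier by (rule subset_trans)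

lemma periodic_gens_inv:
  assumes "g \<in> periodic_gens k"
  shows "inv\<^bsub>Seq\<^esub> g \<in> periodic_gens k"
proof -
  obtain j p where j: "k \<le> j" "range g \<subseteq> lcs G j" and p: "p \<in> {1..N j}" "has_period p g"
    using assms by (auto simp: periodic_gens_def)
  have "inv\<^bsub>Seq\<^esub> g = (\<lambda>t. inv (g t))"
    using range_lcs_seq_carrier[OF j(2)] by (rule seq_group_inv)
  moreover have "range (\<lambda>t. inv (g t)) \<subseteq> lcs G j"
    using j(2) lcs_inv by blast
  moreover have "has_period p (\<lambda>t. inv (g t))"
    using p(2) unfolding has_period_def by simp
  ultimately show ?thesis
    using j(1) p(1) unfolding periodic_gens_def by (intro CollectI exI[of _ j]) auto
qed

lemma commutator_periodic_gens:
  assumes a: "a \<in> periodic_gens k" and b: "b \<in> periodic_gens 0"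
  shows "inv\<^bsub>Seq\<^esub> a \<otimes>\<^bsub>Seq\<^esub> b \<otimes>\<^bsub>Seq\<^esub> a \<otimes>\<^bsub>Seq\<^esub> inv\<^bsub>Seq\<^esub> b \<in> periodic_gens (Suc k)"
proof -
  obtain j p where j: "k \<le> j" "range a \<subseteq> lcs G j" and p: "p \<in> {1..N j}" "has_period p a"
    using a by (auto simp: periodic_gens_def)
  obtain i r where i: "range b \<subseteq> lcs G i" and r: "r \<in> {1..N i}" "has_period r b"
    using b by (auto simp: periodic_gens_def)
  let ?h = "\<lambda>t. inv (a t) \<otimes> b t \<otimes> a t \<otimes> inv (b t)"
  have "inv\<^bsub>Seq\<^esub> a \<otimes>\<^bsub>Seq\<^esub> b \<otimes>\<^bsub>Seq\<^esub> a \<otimes>\<^bsub>Seq\<^esub> inv\<^bsub>Seq\<^esub> b = ?h"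
    using range_lcs_seq_carrier[OF j(2)] range_lcs_seq_carrier[OF i]
    by (simp add: seq_group_inv seq_group_mult)
  moreover have "range ?h \<subseteq> lcs G (Suc (max j i))"
  proof (rule image_subsetI)
    fix t
    show "?h t \<in> lcs G (Suc (max j i))"
      using j(2) i by (intro commutator_in_lcs_max) auto
  qed
  moreover have "has_period (p * r) ?h"
    using has_period_dvd[OF p(2), of "p * r"] has_period_dvd[OF r(2), of "p * r"]
    by (simp add: has_period_def)
  moreover have "p * r \<le> N (Suc (max j i))"
    using p(1) r(1) mult_le_mono[of p "N j" r "N i"] N_mult[of j i] by auto
  ultimately show ?thesis
    using j(1) p(1) r(1) unfolding periodic_gens_def
    by (intro CollectI exI[of _ "Suc (max j i)"]) auto
qed

lemma layer_gens_commutator: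
  assumes "a \<in> layer_gens k Q" and "b \<in> periodic_gens 0"
  shows "inv\<^bsub>Seq\<^esub> a \<otimes>\<^bsub>Seq\<^esub> b \<otimes>\<^bsub>Seq\<^esub> a \<otimes>\<^bsub>Seq\<^esub> inv\<^bsub>Seq\<^esub> b \<in> layer_gens k Q"
  using commutator_periodic_gens[of a k b] assms layer_gens_subset
  unfolding layer_gens_def by blast

lemma layer_series_conj:
  assumes "u \<in> periodic_series 0" and "x \<in> layer_series k Q"
  shows "u \<otimes>\<^bsub>Seq\<^esub> x \<otimes>\<^bsub>Seq\<^esub> inv\<^bsub>Seq\<^esub> u \<in> layer_series k Q"
  using assms unfolding periodic_series_def layer_series_def
  by (intro Seq.generate_conj_closed[OF layer_gens_carrier periodic_gens_carrier
      periodic_gens_inv layer_gens_commutator])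

lemma range_funpow_shift: "range ((shift ^^ q) g) \<subseteq> range g"
  by (auto simp: funpow_shift)

lemma layer_gens_shift:
  assumes "g \<in> layer_gens k Q"
  shows "(shift ^^ q) g \<in> layer_gens k Q"
  using assms range_funpow_shift[of q g] has_period_funpow_shift[of _ g q]
  unfolding layer_gens_def periodic_gens_def by blast

lemma shift_diff_layer_series:
  assumes x: "x \<in> layer_series k Q" and q: "q \<in> Q"
  shows "shift_diff q x \<in> layer_series k (Q - {q})"
proof (rule Seq.cocycle_image_generate[where D = "shift_diff q"])
  show "x \<in> generate Seq (layer_gens k Q)" using x unfolding layer_series_def .
  show "subgroup (layer_series k (Q - {q})) Seq"
    unfolding layer_series_def by (rule Seq.generate_is_subgroup[OF layer_gens_carrier])
next
  fix s assume s: "s \<in> layer_gens k Q"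
  show "shift_diff q s \<in> layer_series k (Q - {q})"
  proof (cases "s \<in> layer_gens k (Q - {q})")
    case True
    then show ?thesis
      unfolding shift_diff_def layer_series_def
      by (intro generate.eng generate.incl generate.inv layer_gens_shift)
  next
    case False
    then have "has_period q s" using s by (auto simp: layer_gens_def)
    moreover have "s \<in> carrier Seq" using s layer_gens_carrier by blast
    ultimately show ?thesis
      by (simp add: shift_diff_periodic layer_series_def generate.one)
  qed
next
  fix u r assume "u \<in> generate Seq (layer_gens k Q)" and "r \<in> layer_series k (Q - {q})"
  moreover have "generate Seq (layer_gens k Q) \<subseteq> periodic_series 0"
    unfolding periodic_series_def
    using layer_gens_subset periodic_gens_antimono[of 0 k] by (intro Seq.mono_generate) blast
  ultimately show "u \<otimes>\<^bsub>Seq\<^esub> r \<otimes>\<^bsub>Seq\<^esub> inv\<^bsub>Seq\<^esub> u \<in> layer_series k (Q - {q})"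
    using layer_series_conj by blast
qed (auto simp: layer_gens_carrier shift_diff_carrier shift_diff_mult)

lemma layer_series_mono: "Q \<subseteq> Q' \<Longrightarrow> layer_series k Q \<subseteq> layer_series k Q'"
  unfolding layer_series_def by (rule Seq.mono_generate) (auto simp: layer_gens_def)

lemma fold_shift_diff_layer_series:
  "x \<in> layer_series k (set qs \<union> Q) \<Longrightarrow> fold shift_diff qs x \<in> layer_series k Q"
proof (induction qs arbitrary: x)
  case (Cons q qs)
  have "shift_diff q x \<in> layer_series k ((set (q # qs) \<union> Q) - {q})"
    using Cons.prems by (intro shift_diff_layer_series) auto
  also have "\<dots> \<subseteq> layer_series k (set qs \<union> Q)"
    by (rule layer_series_mono) auto
  finally show ?case using Cons.IH by simp
qed simp

lemma periodic_series_subset_layer_series: "periodic_series k \<subseteq> layer_series k {1..N k}"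
  unfolding periodic_series_def layer_series_def
proof (rule Seq.mono_generate, rule subsetI)
  fix g assume "g \<in> periodic_gens k"
  then obtain j p where j: "k \<le> j" "range g \<subseteq> lcs G j" and p: "p \<in> {1..N j}" "has_period p g"
    by (auto simp: periodic_gens_def)
  show "g \<in> layer_gens k {1..N k}"
  proof (cases "j = k")
    case True
    then show ?thesis using j p by (auto simp: layer_gens_def)
  next
    case False
    then have "g \<in> periodic_gens (Suc k)"
      using j p unfolding periodic_gens_def by (intro CollectI exI[of _ j]) auto
    then show ?thesis by (simp add: layer_gens_def)
  qed
qed

lemma layer_series_empty: "layer_series k {} = periodic_series (Suc k)"
  by (simp add: layer_series_def periodic_series_def layer_gens_def)

lemma fold_shift_diff_periodic_series:
  assumes "x \<in> periodic_series k"
  shows "fold shift_diff [1..<Suc (N k)] x \<in> periodic_series (Suc k)"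
proof -
  have "set [1..<Suc (N k)] \<union> {} = {1..N k}" by auto
  then have "x \<in> layer_series k (set [1..<Suc (N k)] \<union> {})"
    using assms periodic_series_subset_layer_series by auto
  then have "fold shift_diff [1..<Suc (N k)] x \<in> layer_series k {}"
    by (rule fold_shift_diff_layer_series)
  then show ?thesis by (simp only: layer_series_empty)
qed

definition shift_diff_periods :: "nat \<Rightarrow> nat list" where
  "shift_diff_periods m = concat (map (\<lambda>k. [1..<Suc (N k)]) [0..<m])"

lemma shift_diff_periods_Suc:
  "shift_diff_periods (Suc m) = shift_diff_periods m @ [1..<Suc (N m)]"
  unfolding shift_diff_periods_def upt_Suc_append[OF le0] by (simp del: upt_Suc)

lemma fold_shift_diff_periods:
  "x \<in> periodic_series 0 \<Longrightarrow> fold shift_diff (shift_diff_periods m) x \<in> periodic_series m"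
proof (induction m)
  case 0
  then show ?case by (simp add: shift_diff_periods_def)
next
  case (Suc m)
  show ?case
    unfolding shift_diff_periods_Suc fold_append comp_apply
    by (rule fold_shift_diff_periodic_series[OF Suc.IH[OF Suc.prems]])
qed

lemma sum_list_shift_diff_periods: "sum_list (shift_diff_periods m) \<le> (\<Sum>k<m. N k * N k)"
proof (induction m)
  case 0
  then show ?case by (simp add: shift_diff_periods_def)
next
  case (Suc m)
  have "sum_list [1..<Suc n] \<le> n * n" for n
    by (induction n) auto
  then show ?case
    using Suc by (simp add: shift_diff_periods_Suc add_mono del: upt_Suc)
qed

lemma periodic_series_trivial:
  assumes "lcs G c = {\<one>}"
  shows "periodic_series c = {\<one>\<^bsub>Seq\<^esub>}"
proof -
  have "periodic_gens c \<subseteq> {\<one>\<^bsub>Seq\<^esub>}"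
  proof
    fix g assume "g \<in> periodic_gens c"
    then obtain j where "c \<le> j" "range g \<subseteq> lcs G j" by (auto simp: periodic_gens_def)
    then have "g t = \<one>" for t using lcs_trivial_from[OF assms] by blast
    then show "g \<in> {\<one>\<^bsub>Seq\<^esub>}" by (simp add: seq_group_one fun_eq_iff)
  qed
  then have "periodic_series c \<subseteq> {\<one>\<^bsub>Seq\<^esub>}"
    unfolding periodic_series_def using Seq.mono_generate Seq.generate_one by blast
  then show ?thesis unfolding periodic_series_def using generate.one by blast
qed

theorem periodic_series_recurrence:
  assumes nilpotent: "lcs G c = {\<one>}" and f: "f \<in> periodic_series 0"
    and d: "(\<Sum>k<c. N k * N k) \<le> d"
  shows "(shift ^^ d) f \<in> shift_span f d"
proof (rule shift_span_recurrence_mono)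
  show f_carrier: "f \<in> carrier Seq"
    using f Seq.generate_in_carrier[OF periodic_gens_carrier] unfolding periodic_series_def by blast
  have "fold shift_diff (shift_diff_periods c) f = \<one>\<^bsub>Seq\<^esub>"
    using fold_shift_diff_periods[OF f, of c] periodic_series_trivial[OF nilpotent] by simp
  then show "(shift ^^ sum_list (shift_diff_periods c)) f \<in> shift_span f (sum_list (shift_diff_periods c))"
    by (intro recurrence_of_fold_shift_diff f_carrier) (auto simp: shift_diff_periods_def)
  show "sum_list (shift_diff_periods c) \<le> d"
    using sum_list_shift_diff_periods d by (rule order_trans)
qed

lemma periodic_subgroup_subset:
  assumes "n \<le> N 0"
  shows "periodic_subgroup G n \<subseteq> periodic_series 0"
  unfolding periodic_subgroup_def periodic_series_def
proof (rule Seq.mono_generate, rule subsetI)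
  fix f assume "f \<in> {f \<in> carrier Seq. has_period_at_most n f}"
  then obtain q where f: "f \<in> carrier Seq" and q: "1 \<le> q" "q \<le> n" and per: "\<forall>t. f t = f (t + q)"
    by (auto simp: has_period_at_most_def)
  have "range f \<subseteq> lcs G 0" using f by (auto simp: seq_group_carrier)
  moreover have "has_period q f" using per by (simp add: has_period_def)
  moreover have "q \<in> {1..N 0}" using q assms by simp
  ultimately show "f \<in> periodic_gens 0"
    unfolding periodic_gens_def by blast
qed

end

lemma power_two_power_mono:
  assumes "a \<le> b"
  shows "(n::nat) ^ 2 ^ a \<le> n ^ 2 ^ b"
proof (cases "n = 0")
  case True
  then show ?thesis by (simp add: power_0_left)
next
  case False
  then show ?thesis using assms by (simp add: power_increasing)
qed

lemma power_two_power_mult: "(n::nat) ^ 2 ^ i * n ^ 2 ^ j \<le> n ^ 2 ^ Suc (max i j)"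
proof -
  have "(2::nat) ^ i \<le> 2 ^ max i j" and "(2::nat) ^ j \<le> 2 ^ max i j"
    by (simp_all add: power_increasing)
  then have "(2::nat) ^ i + 2 ^ j \<le> 2 * 2 ^ max i j" by linarith
  then have "(2::nat) ^ i + 2 ^ j \<le> 2 ^ Suc (max i j)" by simp
  then have "n ^ (2 ^ i + 2 ^ j) \<le> n ^ 2 ^ Suc (max i j)"
    by (cases "n = 0") (simp_all add: power_increasing power_0_left)
  then show ?thesis by (simp add: power_add)
qed

lemma sum_power_two_power_le: "(\<Sum>k<c. (n::nat) ^ 2 ^ k * n ^ 2 ^ k) \<le> c * n ^ 2 ^ c"
proof -
  have "n ^ 2 ^ k * n ^ 2 ^ k \<le> n ^ 2 ^ c" if "k < c" for k
    using power_two_power_mult[of n k k] power_two_power_mono[of "Suc k" c n] that by simp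
  then show ?thesis
    using sum_mono[of "{..<c}" "\<lambda>k. n ^ 2 ^ k * n ^ 2 ^ k" "\<lambda>_. n ^ 2 ^ c"] by simp
qed

lemma periodic_subgroup_recurrence:
  assumes G: "group G" and nilpotent: "lcs G c = {\<one>\<^bsub>G\<^esub>}" and f: "f \<in> periodic_subgroup G n"
  shows "satisfies_recurrence G (1 + c * n ^ 2 ^ c) f"
proof -
  interpret periodic_filtration G "\<lambda>j. n ^ 2 ^ j"
    by (intro periodic_filtration.intro periodic_filtration_axioms.intro power_two_power_mult)
      (simp add: sequence_group_def G)
  have "f \<in> periodic_series 0"
    using periodic_subgroup_subset[of n] f by auto
  then have "(shift ^^ (1 + c * n ^ 2 ^ c)) f \<in> shift_span f (1 + c * n ^ 2 ^ c)"
    using sum_power_two_power_le[where c = c and n = n] by (intro periodic_series_recurrence[OF nilpotent]) auto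
  then show ?thesis by (simp add: satisfies_recurrenceI)
qed

theorem mainTheorem12:
  fixes G :: "('a, 'b) monoid_scheme"
  assumes "nilpotent_group G" and "finitely_generated_group G"
  shows "\<exists>p :: int poly. \<forall>n :: nat. \<forall>f \<in> periodic_subgroup G n.
           satisfies_recurrence G (nat (poly p (int n))) f"
proof -
  obtain c where G: "group G" and nilpotent: "lcs G c = {\<one>\<^bsub>G\<^esub>}"
    using assms(1) by (auto simp: nilpotent_group_def)
  define p :: "int poly" where "p = 1 + monom (int c) (2 ^ c)"
  have "nat (poly p (int n)) = 1 + c * n ^ 2 ^ c" for n
  proof -
    have "poly p (int n) = int (1 + c * n ^ 2 ^ c)" by (simp add: p_def poly_monom)
    then show ?thesis by (simp only: nat_int)
  qed
  then show ?thesis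
    using periodic_subgroup_recurrence[OF G nilpotent] by (intro exI[of _ p]) simp
qed

end
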